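(* Let $\tau>0$, $\xi>0$, and let $g$ be a scaled Wiener process with scale parameter $\tau$ (increments $g(s_2)-g(s_1)\sim \mathrm{N}(0,\tau^2(s_2-s_1))$) started at $g(0)=g_0>0$, conditioned (in the sense of Doob's $h$-transform) on the event that its first downward crossing of zero, $\inf\{s: g(s)=0\}$, occurs at $s=\xi$. Let $0<s_1<\xi$, write $g_1\equiv g(s_1)$, and put $u=s_1/\xi$. Then the conditional distribution of $g_1$ given $g_0,\xi,\tau$ is the fractional normal distribution $\mathrm{FN}(g_1\mid g_0,\xi,\tau)$, with density on $g_1>0$ $$p(g_1\mid g_0,\xi,\tau)=\frac{\sqrt{2}\,e^{-m^2/2}}{m h^2\sqrt{\pi}}\; g_1\sinh(m g_1/h)\,\exp\Big\{-\frac{g_1^2}{2h^2}\Big\},$$ where $h=\tau\{\xi u(1-u)\}^{1/2}$ and $m=(g_0/\tau)\{(1-u)/(\xi u)\}^{1/2}$.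
   Context: A scaled Wiener process with scale parameter $\tau$ is a continuous Gaussian process with independent increments $g(s_2)-g(s_1)\sim\mathrm{N}(0,\tau^2(s_2-s_1))$ for $s_2\ge s_1$. The conditioning on the first zero-crossing time $\xi$ forces $g>0$ on $(0,\xi)$. *)

theory Defs
  imports "HOL-Analysis.Analysis"
begin

text \<open>Transition density of the scaled Wiener process with scale tau:
  g(s+t) - g(s) ~ N(0, tau^2 t).\<close>
definition wiener_kernel :: "real \<Rightarrow> real \<Rightarrow> real \<Rightarrow> real \<Rightarrow> real" where
  "wiener_kernel tau t x y =
     exp (- ((y - x)^2) / (2 * tau^2 * t)) / (tau * sqrt (2 * pi * t))"

text \<open>Sub-probability transition density (on y > 0) of the scaled Wiener process
  started at x > 0 and killed at its first hitting time of zero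
  (method of images / reflection principle).\<close>
definition killed_kernel :: "real \<Rightarrow> real \<Rightarrow> real \<Rightarrow> real \<Rightarrow> real" where
  "killed_kernel tau t x y = wiener_kernel tau t x y - wiener_kernel tau t x (- y)"

text \<open>Density at time t of the first hitting time of zero, inf {s. g(s) = 0},
  for the scaled Wiener process started at x > 0 (Levy distribution).\<close>
definition first_passage_density :: "real \<Rightarrow> real \<Rightarrow> real \<Rightarrow> real" where
  "first_passage_density tau x t =
     x / (tau * sqrt (2 * pi * t^3)) * exp (- (x^2) / (2 * tau^2 * t))"

text \<open>Doob h-transform: density of g(s1) (at g1) for the process started at g0,
  conditioned on its first zero-crossing occurring at time xi (0 < s1 < xi).\<close>
definition cond_density :: "real \<Rightarrow> real \<Rightarrow> real \<Rightarrow> real \<Rightarrow> real \<Rightarrow> real" where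
  "cond_density tau g0 xi s1 g1 =
     (if 0 < g1 then
        killed_kernel tau s1 g0 g1 * first_passage_density tau g1 (xi - s1)
          / first_passage_density tau g0 xi
      else 0)"

definition FN_density :: "real \<Rightarrow> real \<Rightarrow> real \<Rightarrow> real \<Rightarrow> real \<Rightarrow> real" where
  "FN_density g0 xi tau s1 g1 =
     (let u = s1 / xi;
          h = tau * sqrt (xi * u * (1 - u));
          m = (g0 / tau) * sqrt ((1 - u) / (xi * u))
      in if 0 < g1 then
           sqrt 2 * exp (- (m^2) / 2) / (m * h^2 * sqrt pi)
             * g1 * sinh (m * g1 / h) * exp (- (g1^2) / (2 * h^2))
         else 0)"

end

theory Submission
  imports Defs "HOL-Probability.Probability"
begin

text \<open>Both densities are rewritten in terms of normal densities. The Wiener and first-passage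
  kernels are Gaussian in the end point, so by the product formula for Gaussian densities (the
  Brownian bridge) the h-transform at g1 > 0 becomes g1 (N(b, h)(g1) - N(-b, h)(g1)) / b with
  b = g0 (1 - u); the image term -N(-b, h) comes from the killing at zero. The fractional normal
  density is the same expression, since sinh splits it into the two mirrored Gaussians.
  Finally y (N(b, h)(y) - N(-b, h)(y)) is an even function of y, so its integral over
  (0, \<infinity>) is half of its integral 2b over the line.\<close>

lemma gaussian_exponent_sum:
  fixes a c y p q :: real
  assumes "0 < p" "0 < q"
  shows "-(y - a)\<^sup>2 / (2 * p) + -(y - c)\<^sup>2 / (2 * q)
       = -(a - c)\<^sup>2 / (2 * (p + q)) + -(y - (a * q + c * p) / (p + q))\<^sup>2 / (2 * (p * q / (p + q)))"
proof -
  define s where "s = p + q"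
  have "0 < s" using assms by (simp add: s_def)
  have "-(y - a)\<^sup>2 / (2 * p) + -(y - c)\<^sup>2 / (2 * q)
      = -(a - c)\<^sup>2 / (2 * s) + -(y * s - (a * q + c * p))\<^sup>2 / (2 * p * q * s)"
    using assms \<open>0 < s\<close> by (simp add: field_simps) (simp add: s_def algebra_simps power2_eq_square)
  moreover have "(y - (a * q + c * p) / s)\<^sup>2 / (2 * (p * q / s))
      = (y * s - (a * q + c * p))\<^sup>2 / (2 * p * q * s)"
    using assms \<open>0 < s\<close> by (simp add: field_simps power2_eq_square)
  ultimately show ?thesis by (simp add: s_def)
qed

lemma normal_density_mult_normal_density:
  fixes a c y \<sigma> \<sigma>1 \<sigma>2 :: real
  assumes "0 < \<sigma>1" "0 < \<sigma>2" "0 < \<sigma>" "\<sigma>1\<^sup>2 + \<sigma>2\<^sup>2 = \<sigma>\<^sup>2"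
  shows "normal_density a \<sigma>1 y * normal_density c \<sigma>2 y
       = normal_density c \<sigma> a * normal_density ((a * \<sigma>2\<^sup>2 + c * \<sigma>1\<^sup>2) / \<sigma>\<^sup>2) (\<sigma>1 * \<sigma>2 / \<sigma>) y"
proof -
  have var: "(\<sigma>1 * \<sigma>2 / \<sigma>)\<^sup>2 = \<sigma>1\<^sup>2 * \<sigma>2\<^sup>2 / (\<sigma>1\<^sup>2 + \<sigma>2\<^sup>2)"
    using assms(4) by (simp add: power_mult_distrib power_divide)
  have exps: "exp (-(y - a)\<^sup>2 / (2 * \<sigma>1\<^sup>2)) * exp (-(y - c)\<^sup>2 / (2 * \<sigma>2\<^sup>2))
      = exp (-(a - c)\<^sup>2 / (2 * \<sigma>\<^sup>2))
        * exp (-(y - (a * \<sigma>2\<^sup>2 + c * \<sigma>1\<^sup>2) / \<sigma>\<^sup>2)\<^sup>2 / (2 * (\<sigma>1 * \<sigma>2 / \<sigma>)\<^sup>2))"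
    unfolding exp_add[symmetric] var assms(4)[symmetric] using assms(1,2)
    by (subst gaussian_exponent_sum) simp_all
  have prefactor: "sqrt (2 * pi * \<sigma>1\<^sup>2) * sqrt (2 * pi * \<sigma>2\<^sup>2)
      = sqrt (2 * pi * \<sigma>\<^sup>2) * sqrt (2 * pi * (\<sigma>1 * \<sigma>2 / \<sigma>)\<^sup>2)"
    using assms(1-3) by (simp add: real_sqrt_mult real_sqrt_divide)
  show ?thesis
    unfolding normal_density_def using exps prefactor by (simp add: field_simps)
qed

lemma normal_density_uminus: "normal_density \<mu> \<sigma> (- x) = normal_density (- \<mu>) \<sigma> x"
  unfolding normal_density_def by (simp add: power2_commute add.commute)

lemma wiener_kernel_eq_normal_density:
  assumes "0 < tau" "0 < t"
  shows "wiener_kernel tau t x y = normal_density x (tau * sqrt t) y"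
  using assms unfolding wiener_kernel_def normal_density_def
  by (simp add: power_mult_distrib real_sqrt_mult field_simps)

lemma first_passage_density_eq_normal_density:
  assumes "0 < tau" "0 < t"
  shows "first_passage_density tau x t = x / t * normal_density 0 (tau * sqrt t) x"
proof -
  have "sqrt (2 * pi * t ^ 3) = t * sqrt (2 * pi * t)"
    using assms by (simp add: power3_eq_cube real_sqrt_mult)
  then show ?thesis
    using assms unfolding first_passage_density_def normal_density_def
    by (simp add: power_mult_distrib real_sqrt_mult field_simps)
qed

lemma killed_kernel_first_passage_ratio:
  fixes tau s t x y :: real
  assumes "0 < tau" "0 < s" "s < t" "0 < x"
  defines "b \<equiv> x * (t - s) / t" and "h \<equiv> tau * sqrt (s * (t - s) / t)"
  shows "killed_kernel tau s x y * first_passage_density tau y (t - s) / first_passage_density tau x t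
       = y * (normal_density b h y - normal_density (- b) h y) / b"
proof -
  define \<sigma>1 \<sigma>2 \<sigma> where "\<sigma>1 = tau * sqrt s" and "\<sigma>2 = tau * sqrt (t - s)" and "\<sigma> = tau * sqrt t"
  have pos: "0 < \<sigma>1" "0 < \<sigma>2" "0 < \<sigma>" "0 < t"
    using assms(1-3) by (simp_all add: \<sigma>1_def \<sigma>2_def \<sigma>_def)
  have var: "\<sigma>1\<^sup>2 + \<sigma>2\<^sup>2 = \<sigma>\<^sup>2"
    using assms(1-3) by (simp add: \<sigma>1_def \<sigma>2_def \<sigma>_def power_mult_distrib algebra_simps)
  have mean: "(a * \<sigma>2\<^sup>2 + 0 * \<sigma>1\<^sup>2) / \<sigma>\<^sup>2 = a * (t - s) / t" for a
    using assms(1-3) by (simp add: \<sigma>2_def \<sigma>_def power_mult_distrib)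
  have sd: "\<sigma>1 * \<sigma>2 / \<sigma> = h"
    using assms(1-3) unfolding h_def
    by (simp add: \<sigma>1_def \<sigma>2_def \<sigma>_def real_sqrt_mult real_sqrt_divide)
  have bridge: "normal_density a \<sigma>1 y * normal_density 0 \<sigma>2 y
      = normal_density 0 \<sigma> a * normal_density (a * (t - s) / t) h y" for a
    using normal_density_mult_normal_density[OF pos(1-3) var, of a y 0] unfolding mean sd .
  have "killed_kernel tau s x y * first_passage_density tau y (t - s)
      = y / (t - s) * (normal_density x \<sigma>1 y * normal_density 0 \<sigma>2 y
                       - normal_density (- x) \<sigma>1 y * normal_density 0 \<sigma>2 y)"
    using assms(1-3) unfolding \<sigma>1_def \<sigma>2_def
    by (simp add: killed_kernel_def wiener_kernel_eq_normal_density first_passage_density_eq_normal_density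
        normal_density_uminus algebra_simps)
  also have "\<dots> = y / (t - s) * normal_density 0 \<sigma> x * (normal_density b h y - normal_density (- b) h y)"
    unfolding bridge b_def by (simp add: normal_density_uminus algebra_simps minus_divide_left)
  finally have numerator: "killed_kernel tau s x y * first_passage_density tau y (t - s)
      = y / (t - s) * normal_density 0 \<sigma> x * (normal_density b h y - normal_density (- b) h y)" .
  have denominator: "first_passage_density tau x t = x / t * normal_density 0 \<sigma> x"
    using assms(1) pos(4) unfolding \<sigma>_def by (rule first_passage_density_eq_normal_density)
  have "0 < normal_density 0 \<sigma> x"
    using pos by (simp add: normal_density_pos)
  then show ?thesis
    unfolding numerator denominator using assms(2-4) by (simp add: b_def field_simps)
qed

lemma normal_density_scaled_mean:
  assumes "0 < h"
  shows "normal_density (c * h) h y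
       = exp (-(c\<^sup>2) / 2) * exp (c * y / h) * exp (-(y\<^sup>2) / (2 * h\<^sup>2)) / (sqrt 2 * sqrt pi * h)"
proof -
  have "-(y - c * h)\<^sup>2 / (2 * h\<^sup>2) = -(c\<^sup>2) / 2 + c * y / h + -(y\<^sup>2) / (2 * h\<^sup>2)"
    using assms by (simp add: field_simps power2_eq_square)
  then show ?thesis
    using assms unfolding normal_density_def
    by (simp add: exp_add[symmetric] real_sqrt_mult)
qed

lemma sinh_gaussian_eq_normal_density_diff:
  fixes m h y :: real
  assumes "0 < m" "0 < h"
  shows "sqrt 2 * exp (-(m\<^sup>2) / 2) / (m * h\<^sup>2 * sqrt pi) * y * sinh (m * y / h) * exp (-(y\<^sup>2) / (2 * h\<^sup>2))
       = y * (normal_density (m * h) h y - normal_density (- (m * h)) h y) / (m * h)"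
proof -
  have minus: "- (m * h) = (- m) * h" by simp
  have sqrt2: "sqrt 2 * (sqrt 2 * z) = 2 * z" for z :: real
    by (simp add: mult.assoc[symmetric])
  show ?thesis
    unfolding minus normal_density_scaled_mean[OF assms(2)] sinh_def using assms
    by (simp add: field_simps sqrt2 power2_eq_square)
qed

lemma has_integral_mirrored_normal_density_first_moment:
  fixes b h :: real
  assumes "0 < h"
  shows "((\<lambda>y. y * (normal_density b h y - normal_density (- b) h y)) has_integral b) {0<..}"
proof -
  define \<phi> where "\<phi> = (\<lambda>y::real. y * (normal_density b h y - normal_density (- b) h y))"
  define pos neg where "pos = (\<lambda>y. \<phi> y * indicator {0<..} y)" and "neg = (\<lambda>y. \<phi> y * indicator {..<0} y)"
  have "has_bochner_integral lborel (\<lambda>y. normal_density b h y * y - normal_density (- b) h y * y) (b - (- b))"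
    by (intro has_bochner_integral_diff normal_moment_nz_1[OF assms])
  then have \<phi>: "has_bochner_integral lborel \<phi> (2 * b)"
    unfolding \<phi>_def by (simp add: algebra_simps)
  then have pos_int: "integrable lborel pos" and neg_int: "integrable lborel neg"
    unfolding pos_def neg_def by (auto intro!: integrable_real_mult_indicator simp: has_bochner_integral_iff)
  have "\<phi> (- y) = \<phi> y" for y
    unfolding \<phi>_def normal_density_uminus by (simp add: algebra_simps)
  then have "(\<lambda>y. neg (0 + (- 1) * y)) = pos"
    unfolding pos_def neg_def by (auto simp: fun_eq_iff indicator_def)
  then have reflect: "integral\<^sup>L lborel neg = integral\<^sup>L lborel pos"
    using lborel_integral_real_affine[of "- 1" neg 0] by simp
  have "\<phi> = (\<lambda>y. pos y + neg y)"
    unfolding pos_def neg_def \<phi>_def by (auto simp: fun_eq_iff indicator_def)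
  with \<phi> pos_int neg_int have "integral\<^sup>L lborel pos + integral\<^sup>L lborel neg = 2 * b"
    by (simp add: has_bochner_integral_iff)
  then have "(pos has_integral b) UNIV"
    using has_integral_integral_real[OF pos_int] reflect by simp
  moreover have "pos = (\<lambda>y. if y \<in> {0<..} then \<phi> y else 0)"
    unfolding pos_def by (auto simp: fun_eq_iff)
  ultimately show ?thesis
    unfolding \<phi>_def using has_integral_restrict_UNIV by metis
qed


lemma FN_density_eq_normal_density_diff:
  fixes tau xi g0 s1 y :: real
  assumes "0 < tau" "0 < g0" "0 < s1" "s1 < xi"
  defines "b \<equiv> g0 * (xi - s1) / xi" and "h \<equiv> tau * sqrt (s1 * (xi - s1) / xi)"
  shows "FN_density g0 xi tau s1 y
       = (if 0 < y then y * (normal_density b h y - normal_density (- b) h y) / b else 0)"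
proof -
  define u where "u = s1 / xi"
  have u: "0 < u" "u < 1" "1 - u = (xi - s1) / xi"
    using assms(3,4) by (simp_all add: u_def field_simps)
  have h_eq: "tau * sqrt (xi * u * (1 - u)) = h"
    using assms(3,4) by (simp add: h_def u_def field_simps)
  define m where "m = (g0 / tau) * sqrt ((1 - u) / (xi * u))"
  have "m * h = g0 * (sqrt ((1 - u) / (xi * u)) * sqrt (xi * u * (1 - u)))"
    using assms(1) by (simp add: m_def h_eq[symmetric])
  also have "\<dots> = g0 * sqrt (((1 - u) / (xi * u)) * (xi * u * (1 - u)))"
    by (simp only: real_sqrt_mult)
  also have "((1 - u) / (xi * u)) * (xi * u * (1 - u)) = (1 - u)\<^sup>2"
    using assms(3,4) u by (simp add: field_simps power2_eq_square)
  also have "g0 * sqrt ((1 - u)\<^sup>2) = b"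
    using u(2) by (simp add: b_def) (simp add: u(3))
  finally have mh_eq: "m * h = b" .
  have m_pos: "0 < m" and h_pos: "0 < h"
    using assms u by (simp_all add: m_def h_eq[symmetric])
  show ?thesis
    unfolding FN_density_def Let_def u_def[symmetric] h_eq m_def[symmetric]
      sinh_gaussian_eq_normal_density_diff[OF m_pos h_pos] mh_eq ..
qed

theorem proposition1:
  fixes tau xi g0 s1 :: real
  assumes "0 < tau" and "0 < xi" and "0 < g0" and "0 < s1" and "s1 < xi"
  shows "(\<forall>g1. cond_density tau g0 xi s1 g1 = FN_density g0 xi tau s1 g1)
         \<and> (FN_density g0 xi tau s1 has_integral 1) {0<..}"
proof -
  define b where "b = g0 * (xi - s1) / xi"
  define h where "h = tau * sqrt (s1 * (xi - s1) / xi)"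
  define \<phi> where "\<phi> = (\<lambda>y. y * (normal_density b h y - normal_density (- b) h y) / b)"
  have b_pos: "0 < b" and h_pos: "0 < h"
    using assms by (simp_all add: b_def h_def)
  have FN: "FN_density g0 xi tau s1 y = (if 0 < y then \<phi> y else 0)" for y
    unfolding \<phi>_def b_def h_def using assms(1,3-5) by (rule FN_density_eq_normal_density_diff)
  have "cond_density tau g0 xi s1 y = FN_density g0 xi tau s1 y" for y
    using killed_kernel_first_passage_ratio[OF assms(1,4,5,3)]
    unfolding FN cond_density_def \<phi>_def b_def h_def by simp
  moreover have "(\<phi> has_integral 1) {0<..}"
    using has_integral_divide[OF has_integral_mirrored_normal_density_first_moment[OF h_pos, of b], where c = b]
      b_pos unfolding \<phi>_def by simp
  then have "(FN_density g0 xi tau s1 has_integral 1) {0<..}"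
    by (subst has_integral_cong[where g = \<phi>]) (simp_all add: FN)
  ultimately show ?thesis by blast
qed

end
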